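(* Let $H$ be a connected graph with $k=|V(H)|>1$ vertices that does not contain two true twins or does not contain two false twins. Then for every $p\in[0,1)$ there is no deterministic algorithm solving the Delayed Connected $H$-Node-Deletion Problem with predictions that has both consistency less than $k-\frac{1}{2-p}(k-1)$ and robustness less than $k+\frac{p}{1-p}$.
   Context: All graphs are finite, simple and undirected. Two distinct vertices are false twins if they have the same open neighborhood, and true twins if they have the same closed neighborhood $N[v]=N(v)\cup\{v\}$. An induced copy of $H$ in $G$ is an induced subgraph isomorphic to $H$; $G$ is $H$-free if it has none. An online graph $G$ has vertices $v_1,\dots,v_n$ revealed one at a time; $G_t=G[\{v_1,\dots,v_t\}]$. Delayed Connected $H$-Node-Deletion Problem with predictions (fixed connected $H$): when $v_t$ is revealed the algorithm receives a bit $u_t(G)\in\{0,1\}$; it must choose sets $S_1\subseteq\dots\subseteq S_n$ with $S_t\subseteq V(G_t)$ and $G_t-S_t$ $H$-free for each $t$, where $S_t$ depends only on $G_t$ and $u_1(G),\dots,u_t(G)$; the cost is $|S_n|$. $\mathrm{OPT}(G)$ is the minimum size of $S\subseteq V(G)$ with $G-S$ $H$-free. The advice is correct if the set of vertices with bit $1$ is a minimum-size such set. An algorithm is $(r,w)$-competitive if there is a constant $\alpha\ge0$ such that for every online graph $G$: for some correct advice its cost is at most $r\cdot\mathrm{OPT}(G)+\alpha$, and for every advice (correct or not) its cost is at most $w\cdot\mathrm{OPT}(G)+\alpha$. Consistency (resp. robustness) is the infimum of such $r$ (resp. $w$). *)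

theory Defs
  imports Complex_Main "HOL-Library.Extended_Real"
begin

definition simple_graph :: "'a set \<Rightarrow> ('a \<Rightarrow> 'a \<Rightarrow> bool) \<Rightarrow> bool" where
  "simple_graph V E \<longleftrightarrow> finite V \<and> (\<forall>x y. E x y \<longrightarrow> x \<in> V \<and> y \<in> V)
     \<and> (\<forall>x y. E x y \<longrightarrow> E y x) \<and> (\<forall>x. \<not> E x x)"

definition connected_graph :: "'a set \<Rightarrow> ('a \<Rightarrow> 'a \<Rightarrow> bool) \<Rightarrow> bool" where
  "connected_graph V E \<longleftrightarrow> (\<forall>a\<in>V. \<forall>b\<in>V. (\<lambda>x y. E x y \<and> x \<in> V \<and> y \<in> V)\<^sup>*\<^sup>* a b)"

definition open_nbhd :: "'a set \<Rightarrow> ('a \<Rightarrow> 'a \<Rightarrow> bool) \<Rightarrow> 'a \<Rightarrow> 'a set" where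
  "open_nbhd V E v = {w \<in> V. E v w}"

definition closed_nbhd :: "'a set \<Rightarrow> ('a \<Rightarrow> 'a \<Rightarrow> bool) \<Rightarrow> 'a \<Rightarrow> 'a set" where
  "closed_nbhd V E v = insert v (open_nbhd V E v)"

definition has_false_twins :: "'a set \<Rightarrow> ('a \<Rightarrow> 'a \<Rightarrow> bool) \<Rightarrow> bool" where
  "has_false_twins V E \<longleftrightarrow> (\<exists>u\<in>V. \<exists>v\<in>V. u \<noteq> v \<and> open_nbhd V E u = open_nbhd V E v)"

definition has_true_twins :: "'a set \<Rightarrow> ('a \<Rightarrow> 'a \<Rightarrow> bool) \<Rightarrow> bool" where
  "has_true_twins V E \<longleftrightarrow> (\<exists>u\<in>V. \<exists>v\<in>V. u \<noteq> v \<and> closed_nbhd V E u = closed_nbhd V E v)"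

definition has_induced_copy ::
    "'h set \<Rightarrow> ('h \<Rightarrow> 'h \<Rightarrow> bool) \<Rightarrow> 'a set \<Rightarrow> ('a \<Rightarrow> 'a \<Rightarrow> bool) \<Rightarrow> bool" where
  "has_induced_copy VH EH X E \<longleftrightarrow>
     (\<exists>f. inj_on f VH \<and> f ` VH \<subseteq> X \<and> (\<forall>a\<in>VH. \<forall>b\<in>VH. E (f a) (f b) \<longleftrightarrow> EH a b))"

definition H_free :: "'h set \<Rightarrow> ('h \<Rightarrow> 'h \<Rightarrow> bool) \<Rightarrow> 'a set \<Rightarrow> ('a \<Rightarrow> 'a \<Rightarrow> bool) \<Rightarrow> bool" where
  "H_free VH EH X E \<longleftrightarrow> \<not> has_induced_copy VH EH X E"

text \<open>An online graph with n vertices: vertices 0,...,n-1 (vertex i is v_{i+1}),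
  revealed in increasing order.  G_t has vertex set {0..<t}.\<close>
definition online_graph :: "nat \<Rightarrow> (nat \<Rightarrow> nat \<Rightarrow> bool) \<Rightarrow> bool" where
  "online_graph n E \<longleftrightarrow> simple_graph {0..<n} E"

definition trunc_graph :: "nat \<Rightarrow> (nat \<Rightarrow> nat \<Rightarrow> bool) \<Rightarrow> nat \<Rightarrow> nat \<Rightarrow> bool" where
  "trunc_graph t E = (\<lambda>i j. i < t \<and> j < t \<and> E i j)"

definition trunc_advice :: "nat \<Rightarrow> (nat \<Rightarrow> bool) \<Rightarrow> nat \<Rightarrow> bool" where
  "trunc_advice t u = (\<lambda>i. i < t \<and> u i)"

definition OPT :: "'h set \<Rightarrow> ('h \<Rightarrow> 'h \<Rightarrow> bool) \<Rightarrow> nat \<Rightarrow> (nat \<Rightarrow> nat \<Rightarrow> bool) \<Rightarrow> nat" where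
  "OPT VH EH n E = (LEAST m. \<exists>S. S \<subseteq> {0..<n} \<and> card S = m \<and> H_free VH EH ({0..<n} - S) E)"

definition correct_advice ::
    "'h set \<Rightarrow> ('h \<Rightarrow> 'h \<Rightarrow> bool) \<Rightarrow> nat \<Rightarrow> (nat \<Rightarrow> nat \<Rightarrow> bool) \<Rightarrow> (nat \<Rightarrow> bool) \<Rightarrow> bool" where
  "correct_advice VH EH n E u \<longleftrightarrow>
     H_free VH EH ({0..<n} - {i. i < n \<and> u i}) E \<and> card {i. i < n \<and> u i} = OPT VH EH n E"

text \<open>A deterministic online algorithm: at time t it sees only t, G_t and the bits u_1..u_t,
  and outputs S_t.  Type: A t G_t u_{\<le>t}.\<close>
type_synonym online_alg = "nat \<Rightarrow> (nat \<Rightarrow> nat \<Rightarrow> bool) \<Rightarrow> (nat \<Rightarrow> bool) \<Rightarrow> nat set"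

definition alg_out :: "online_alg \<Rightarrow> (nat \<Rightarrow> nat \<Rightarrow> bool) \<Rightarrow> (nat \<Rightarrow> bool) \<Rightarrow> nat \<Rightarrow> nat set" where
  "alg_out A E u t = A t (trunc_graph t E) (trunc_advice t u)"

definition valid_run ::
    "'h set \<Rightarrow> ('h \<Rightarrow> 'h \<Rightarrow> bool) \<Rightarrow> online_alg \<Rightarrow> nat \<Rightarrow> (nat \<Rightarrow> nat \<Rightarrow> bool) \<Rightarrow> (nat \<Rightarrow> bool) \<Rightarrow> bool" where
  "valid_run VH EH A n E u \<longleftrightarrow>
     (\<forall>t\<le>n. alg_out A E u t \<subseteq> {0..<t}
        \<and> H_free VH EH ({0..<t} - alg_out A E u t) (trunc_graph t E)
        \<and> (t < n \<longrightarrow> alg_out A E u t \<subseteq> alg_out A E u (Suc t)))"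

definition solves :: "'h set \<Rightarrow> ('h \<Rightarrow> 'h \<Rightarrow> bool) \<Rightarrow> online_alg \<Rightarrow> bool" where
  "solves VH EH A \<longleftrightarrow> (\<forall>n E u. online_graph n E \<longrightarrow> valid_run VH EH A n E u)"

definition cost :: "online_alg \<Rightarrow> nat \<Rightarrow> (nat \<Rightarrow> nat \<Rightarrow> bool) \<Rightarrow> (nat \<Rightarrow> bool) \<Rightarrow> nat" where
  "cost A n E u = card (alg_out A E u n)"

definition competitive ::
    "'h set \<Rightarrow> ('h \<Rightarrow> 'h \<Rightarrow> bool) \<Rightarrow> online_alg \<Rightarrow> real \<Rightarrow> real \<Rightarrow> bool" where
  "competitive VH EH A r w \<longleftrightarrow> (\<exists>\<alpha>::real. \<alpha> \<ge> 0 \<and>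
     (\<forall>n E. online_graph n E \<longrightarrow>
        (\<exists>u. correct_advice VH EH n E u \<and> real (cost A n E u) \<le> r * real (OPT VH EH n E) + \<alpha>)
      \<and> (\<forall>u. real (cost A n E u) \<le> w * real (OPT VH EH n E) + \<alpha>)))"

definition consistency :: "'h set \<Rightarrow> ('h \<Rightarrow> 'h \<Rightarrow> bool) \<Rightarrow> online_alg \<Rightarrow> ereal" where
  "consistency VH EH A = Inf {ereal r | r. \<exists>w. competitive VH EH A r w}"

definition robustness :: "'h set \<Rightarrow> ('h \<Rightarrow> 'h \<Rightarrow> bool) \<Rightarrow> online_alg \<Rightarrow> ereal" where
  "robustness VH EH A = Inf {ereal w | w. \<exists>r. competitive VH EH A r w}"

end

theory Submission
  imports Defs
begin

text \<open>We work with blow-ups of \<open>H\<close>: every vertex of \<open>H\<close> is repeated, the copies of one vertex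
  forming a clique if \<open>H\<close> has no true twins and an independent set if it has no false twins.
  Twin-freeness makes the induced copies of \<open>H\<close> exactly the transversals of the copy classes, so
  an optimal solution deletes a smallest class. The adversary fixes a vertex \<open>h\<^sub>1\<close> whose copies the
  prediction marks, and always presents a vertex all of whose copies have been deleted, choosing
  \<open>h\<^sub>1\<close> whenever possible. After \<open>t\<close> steps the algorithm has therefore deleted at least \<open>t - k\<close>
  vertices, and at least \<open>t - (k - 1)\<close> when \<open>h\<^sub>1\<close> is presented next. Robustness \<open>w\<close> forces the
  number \<open>x\<close> of copies of \<open>h\<^sub>1\<close> to grow without bound; consistency \<open>r\<close> bounds the deletions by
  about \<open>r x\<close>, because padding the graph with many copies of every other vertex makes the
  prediction the unique correct one. Comparing the bounds at the steps where \<open>h\<^sub>1\<close> is presented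
  gives \<open>k - 1 \<le> (w - (k - 1)) (r - 1)\<close>, which the assumed bounds on \<open>r\<close> and \<open>w\<close> rule out.\<close>

lemma competitive_mono:
  assumes "competitive VH EH A r w" "r \<le> r'" "w \<le> w'"
  shows "competitive VH EH A r' w'"
proof -
  obtain \<alpha> where "\<alpha> \<ge> 0" and bounds: "\<forall>n E. online_graph n E \<longrightarrow>
        (\<exists>u. correct_advice VH EH n E u \<and> real (cost A n E u) \<le> r * real (OPT VH EH n E) + \<alpha>)
      \<and> (\<forall>u. real (cost A n E u) \<le> w * real (OPT VH EH n E) + \<alpha>)"
    using assms(1) unfolding competitive_def by blast
  have r: "r * real m \<le> r' * real m" and w: "w * real m \<le> w' * real m" for m
    using assms(2,3) by (simp_all add: mult_right_mono)
  have "\<forall>n E. online_graph n E \<longrightarrow>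
        (\<exists>u. correct_advice VH EH n E u \<and> real (cost A n E u) \<le> r' * real (OPT VH EH n E) + \<alpha>)
      \<and> (\<forall>u. real (cost A n E u) \<le> w' * real (OPT VH EH n E) + \<alpha>)"
  proof (intro allI impI conjI)
    fix n E assume "online_graph n E"
    then obtain u where "correct_advice VH EH n E u"
      and "real (cost A n E u) \<le> r * real (OPT VH EH n E) + \<alpha>"
      using bounds by blast
    moreover note r[of "OPT VH EH n E"]
    ultimately show "\<exists>u. correct_advice VH EH n E u
        \<and> real (cost A n E u) \<le> r' * real (OPT VH EH n E) + \<alpha>"
      by (intro exI[of _ u]) simp
    fix u
    have "real (cost A n E u) \<le> w * real (OPT VH EH n E) + \<alpha>"
      using bounds \<open>online_graph n E\<close> by blast
    with w[of "OPT VH EH n E"]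
    show "real (cost A n E u) \<le> w' * real (OPT VH EH n E) + \<alpha>" by simp
  qed
  with \<open>\<alpha> \<ge> 0\<close> show ?thesis unfolding competitive_def by blast
qed

lemma competitive_combine:
  assumes "competitive VH EH A r w" "competitive VH EH A r' w'"
  shows "competitive VH EH A r w'"
proof -
  obtain \<alpha> where "\<alpha> \<ge> 0" and cons: "\<forall>n E. online_graph n E \<longrightarrow>
        (\<exists>u. correct_advice VH EH n E u \<and> real (cost A n E u) \<le> r * real (OPT VH EH n E) + \<alpha>)"
    using assms(1) unfolding competitive_def by blast
  obtain \<beta> where "\<beta> \<ge> 0" and rob: "\<forall>n E. online_graph n E \<longrightarrow>
        (\<forall>u. real (cost A n E u) \<le> w' * real (OPT VH EH n E) + \<beta>)"
    using assms(2) unfolding competitive_def by blast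
  have "\<forall>n E. online_graph n E \<longrightarrow>
        (\<exists>u. correct_advice VH EH n E u \<and> real (cost A n E u) \<le> r * real (OPT VH EH n E) + max \<alpha> \<beta>)
      \<and> (\<forall>u. real (cost A n E u) \<le> w' * real (OPT VH EH n E) + max \<alpha> \<beta>)"
  proof (intro allI impI conjI)
    fix n E assume "online_graph n E"
    then obtain u where "correct_advice VH EH n E u"
      and "real (cost A n E u) \<le> r * real (OPT VH EH n E) + \<alpha>"
      using cons by blast
    then show "\<exists>u. correct_advice VH EH n E u
        \<and> real (cost A n E u) \<le> r * real (OPT VH EH n E) + max \<alpha> \<beta>"
      by (intro exI[of _ u]) simp
    fix u
    have "real (cost A n E u) \<le> w' * real (OPT VH EH n E) + \<beta>"
      using rob \<open>online_graph n E\<close> by blast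
    then show "real (cost A n E u) \<le> w' * real (OPT VH EH n E) + max \<alpha> \<beta>" by simp
  qed
  with \<open>\<alpha> \<ge> 0\<close> show ?thesis unfolding competitive_def by (intro exI[of _ "max \<alpha> \<beta>"]) simp
qed

lemma consistency_robustness_lessE:
  assumes "consistency VH EH A < ereal R" "robustness VH EH A < ereal W"
  obtains r w where "competitive VH EH A r w" "r < R" "w < W"
proof -
  obtain r w where "competitive VH EH A r w" "r < R"
    using assms(1) unfolding consistency_def Inf_less_iff by auto
  moreover obtain r' w' where "competitive VH EH A r' w'" "w' < W"
    using assms(2) unfolding robustness_def Inf_less_iff by auto
  ultimately show thesis using that competitive_combine by blast
qed

lemma valid_run_alg_out_mono:
  assumes "valid_run VH EH A n E u" "t \<le> s" "s \<le> n"
  shows "alg_out A E u t \<subseteq> alg_out A E u s"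
proof -
  have "alg_out A E u (min m n) \<subseteq> alg_out A E u (min (Suc m) n)" for m
    using assms(1) unfolding valid_run_def by (cases "m < n") (auto simp: min_def)
  from lift_Suc_mono_le[of "\<lambda>m. alg_out A E u (min m n)", OF this \<open>t \<le> s\<close>]
  show ?thesis using assms(2,3) by (simp add: min_absorb1)
qed

lemma card_positions_eq_count_list:
  "card {i. i < length xs \<and> xs ! i = x} = count_list xs x"
  using length_filter_conv_card[of "(=) x" xs]
  by (simp add: count_list_eq_length_filter eq_commute)

lemma count_list_replicate_concat_ge:
  "y \<in> set ys \<Longrightarrow> m \<le> count_list (concat (map (\<lambda>z. replicate m z) ys)) y"
  by (induction ys) (auto simp: count_list_eq_length_filter)

lemma exists_list_count_list_ge:
  assumes "finite Y"
  obtains ys where "set ys \<subseteq> Y" "\<And>y. y \<in> Y \<Longrightarrow> m \<le> count_list ys y"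
proof -
  obtain zs where zs: "set zs = Y" using finite_list[OF assms] by blast
  show thesis
  proof (rule that)
    show "set (concat (map (\<lambda>z. replicate m z) zs)) \<subseteq> Y" using zs by auto
    show "m \<le> count_list (concat (map (\<lambda>z. replicate m z) zs)) y" if "y \<in> Y" for y
      using count_list_replicate_concat_ge[of y zs m] that zs by simp
  qed
qed

lemma exists_increase_at_least:
  fixes f :: "nat \<Rightarrow> nat"
  assumes "f 0 \<le> N" "\<And>t. f (Suc t) \<le> f t + 1" "N < f T"
  shows "\<exists>t<T. N \<le> f t \<and> f t < f (Suc t)"
  using assms(3)
proof (induction T)
  case 0
  with assms(1) show ?case by simp
next
  case (Suc T)
  show ?case
  proof (cases "N < f T")
    case True
    with Suc.IH show ?thesis using less_SucI by blast
  next
    case False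
    with Suc.prems assms(2)[of T] have "N \<le> f T" "f T < f (Suc T)" by linarith+
    then show ?thesis by blast
  qed
qed

lemma tradeoff_linear_bound:
  fixes K r w \<alpha> n x y d :: real
  assumes "0 \<le> K" "K \<le> w" "0 \<le> y"
    and cons: "d \<le> r * x + \<alpha>" and rob: "d \<le> w * y + \<alpha>"
    and count: "K * y + x \<le> n" and lower: "n - K \<le> d"
  shows "(K - (w - K) * (r - 1)) * x \<le> (w - K) * (\<alpha> + K) + K * K + K * \<alpha>"
proof -
  have "K * (n - K) \<le> K * (w * y + \<alpha>)"
    using lower rob assms(1) by (intro mult_left_mono) auto
  moreover have "w * (K * y) \<le> w * (n - x)"
    using count assms(1,2) by (intro mult_left_mono) auto
  ultimately have "w * x \<le> (w - K) * n + K * K + K * \<alpha>"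
    by (simp add: algebra_simps)
  moreover have "(w - K) * n \<le> (w - K) * (r * x + \<alpha> + K)"
    using lower cons assms(2) by (intro mult_left_mono) auto
  ultimately show ?thesis by (simp add: algebra_simps)
qed

lemma product_lt_of_bounds:
  fixes p K a b :: real
  assumes p: "0 \<le> p" "p < 1" and "0 < K"
    and a: "0 \<le> a" "a < 1 + p / (1 - p)"
    and b: "0 \<le> b" "b < K - K / (2 - p)"
  shows "a * b < K"
proof -
  have "1 + p / (1 - p) = 1 / (1 - p)" and "K - K / (2 - p) = K * (1 - p) / (2 - p)"
    using p by (simp_all add: field_simps)
  with a b p have "a * b < (1 / (1 - p)) * (K * (1 - p) / (2 - p))"
    by (intro mult_strict_mono) auto
  also have "\<dots> = K / (2 - p)" using p by simp
  also have "\<dots> \<le> K" using p \<open>0 < K\<close> by (simp add: divide_le_eq)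
  finally show ?thesis .
qed

locale twin_free_blowup =
  fixes VH :: "'h set" and EH :: "'h \<Rightarrow> 'h \<Rightarrow> bool" and \<tau> :: bool
  assumes simple: "simple_graph VH EH"
    and twin_free: "if \<tau> then \<not> has_true_twins VH EH else \<not> has_false_twins VH EH"
begin

lemma finite_VH: "finite VH"
  using simple unfolding simple_graph_def by blast

lemma EH_irrefl: "\<not> EH a a"
  using simple unfolding simple_graph_def by blast

lemma EH_sym: "EH a b \<Longrightarrow> EH b a"
  using simple unfolding simple_graph_def by blast

lemma eq_if_same_neighbours:
  assumes a: "a \<in> VH" and b: "b \<in> VH"
    and same: "\<And>c. c \<in> VH \<Longrightarrow> c \<noteq> a \<Longrightarrow> c \<noteq> b \<Longrightarrow> EH a c \<longleftrightarrow> EH b c"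
    and ab: "EH a b \<longleftrightarrow> \<tau>"
  shows "a = b"
proof (rule ccontr)
  assume "a \<noteq> b"
  show False
  proof (cases \<tau>)
    case True
    then have "closed_nbhd VH EH a = closed_nbhd VH EH b"
      using same ab a b EH_sym unfolding closed_nbhd_def open_nbhd_def by blast
    with \<open>a \<noteq> b\<close> a b have "has_true_twins VH EH"
      unfolding has_true_twins_def by blast
    with True twin_free show False by simp
  next
    case False
    then have "open_nbhd VH EH a = open_nbhd VH EH b"
      using same ab EH_sym EH_irrefl unfolding open_nbhd_def by blast
    with \<open>a \<noteq> b\<close> a b have "has_false_twins VH EH"
      unfolding has_false_twins_def by blast
    with False twin_free show False by simp
  qed
qed

definition blowup :: "'h list \<Rightarrow> nat \<Rightarrow> nat \<Rightarrow> bool" where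
  "blowup l i j \<longleftrightarrow> i < length l \<and> j < length l \<and> i \<noteq> j
     \<and> ((\<tau> \<and> l ! i = l ! j) \<or> EH (l ! i) (l ! j))"

lemma trunc_graph_blowup: "trunc_graph t (blowup l) = blowup (take t l)"
  unfolding trunc_graph_def blowup_def by (auto simp: fun_eq_iff)

lemma online_graph_blowup: "online_graph (length l) (blowup l)"
  unfolding online_graph_def simple_graph_def blowup_def using EH_sym by auto

lemma has_induced_copy_blowup:
  assumes X: "X \<subseteq> {0..<length l}" and covers: "VH \<subseteq> (!) l ` X"
  shows "has_induced_copy VH EH X (blowup l)"
proof -
  define f where "f h = (SOME i. i \<in> X \<and> l ! i = h)" for h
  have f: "f h \<in> X \<and> l ! f h = h" if "h \<in> VH" for h
  proof -
    from covers that obtain i where "i \<in> X" "l ! i = h" by blast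
    then show ?thesis unfolding f_def by (rule someI[of _ i, OF conjI])
  qed
  have "inj_on f VH"
  proof (rule inj_onI)
    fix a b assume "a \<in> VH" "b \<in> VH" "f a = f b"
    then show "a = b" using f by metis
  qed
  moreover have "f ` VH \<subseteq> X" using f by blast
  moreover have "blowup l (f a) (f b) \<longleftrightarrow> EH a b" if a: "a \<in> VH" and b: "b \<in> VH" for a b
  proof -
    have "f a < length l" "f b < length l" using f a b X by (meson atLeastLessThan_iff subsetD)+
    moreover have "f a = f b \<longleftrightarrow> a = b" using f a b by metis
    ultimately show ?thesis using f[OF a] f[OF b] EH_irrefl[of a] unfolding blowup_def by auto
  qed
  ultimately show ?thesis unfolding has_induced_copy_def by blast
qed

text \<open>Conversely, twin-freeness forces an induced copy to use distinct labels, hence all of them.\<close>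

lemma labels_of_blowup_embedding_inj:
  assumes inj: "inj_on f VH" and ran: "f ` VH \<subseteq> {0..<length l}"
    and emb: "\<forall>a\<in>VH. \<forall>b\<in>VH. blowup l (f a) (f b) \<longleftrightarrow> EH a b"
  shows "inj_on (\<lambda>a. l ! f a) VH"
proof (rule inj_onI)
  fix a b assume a: "a \<in> VH" and b: "b \<in> VH" and same_label: "l ! f a = l ! f b"
  have f_less: "f c < length l" if "c \<in> VH" for c using ran that by auto
  have f_ne: "f c \<noteq> f d" if "c \<in> VH" "d \<in> VH" "c \<noteq> d" for c d
    using inj that by (meson inj_on_eq_iff)
  show "a = b"
  proof (rule ccontr)
    assume "a \<noteq> b"
    have same_nbrs: "EH a c \<longleftrightarrow> EH b c" if c: "c \<in> VH" "c \<noteq> a" "c \<noteq> b" for c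
    proof -
      have "EH a c \<longleftrightarrow> blowup l (f a) (f c)" using emb a c by blast
      also have "\<dots> \<longleftrightarrow> blowup l (f b) (f c)"
        using same_label f_ne[of a c] f_ne[of b c] f_less a b c unfolding blowup_def by auto
      also have "\<dots> \<longleftrightarrow> EH b c" using emb b c by blast
      finally show ?thesis .
    qed
    have "blowup l (f a) (f b) \<longleftrightarrow> EH a b" using emb a b by blast
    then have "EH a b \<longleftrightarrow> \<tau>"
      using a b same_label f_ne[of a b] \<open>a \<noteq> b\<close> f_less EH_irrefl[of "l ! f b"]
      unfolding blowup_def by auto
    with same_nbrs have "a = b" by (rule eq_if_same_neighbours[OF a b])
    with \<open>a \<noteq> b\<close> show False ..
  qed
qed

lemma H_free_blowup_iff:
  assumes X: "X \<subseteq> {0..<length l}" and labels: "set l \<subseteq> VH"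
  shows "H_free VH EH X (blowup l) \<longleftrightarrow> \<not> VH \<subseteq> (!) l ` X"
proof
  assume "H_free VH EH X (blowup l)"
  then show "\<not> VH \<subseteq> (!) l ` X"
    using has_induced_copy_blowup[OF X] unfolding H_free_def by blast
next
  assume not_covered: "\<not> VH \<subseteq> (!) l ` X"
  show "H_free VH EH X (blowup l)"
    unfolding H_free_def has_induced_copy_def
  proof (intro notI, elim exE conjE)
    fix f assume inj: "inj_on f VH" and ran: "f ` VH \<subseteq> X"
      and emb: "\<forall>a\<in>VH. \<forall>b\<in>VH. blowup l (f a) (f b) \<longleftrightarrow> EH a b"
    have ran_l: "f ` VH \<subseteq> {0..<length l}" using ran X by blast
    have "inj_on (\<lambda>a. l ! f a) VH"
      by (rule labels_of_blowup_embedding_inj[OF inj ran_l emb])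
    moreover have "(\<lambda>a. l ! f a) ` VH \<subseteq> VH"
    proof (rule image_subsetI)
      fix a assume "a \<in> VH"
      with ran_l have "f a < length l" by auto
      with labels show "l ! f a \<in> VH" by (meson nth_mem subsetD)
    qed
    ultimately have "(\<lambda>a. l ! f a) ` VH = VH"
      by (rule endo_inj_surj[OF finite_VH, rotated])
    then have "VH = (!) l ` f ` VH" by (simp add: image_image)
    also have "\<dots> \<subseteq> (!) l ` X" using ran by (rule image_mono)
    finally have "VH \<subseteq> (!) l ` X" .
    with not_covered show False ..
  qed
qed

lemma OPT_blowup_le_count_list:
  assumes "set l \<subseteq> VH" "h \<in> VH"
  shows "OPT VH EH (length l) (blowup l) \<le> count_list l h"
proof -
  let ?S = "{i. i < length l \<and> l ! i = h}"
  have "H_free VH EH ({0..<length l} - ?S) (blowup l)"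
    using H_free_blowup_iff[of "{0..<length l} - ?S" l] assms by auto
  moreover have "?S \<subseteq> {0..<length l}" by auto
  ultimately have "OPT VH EH (length l) (blowup l) \<le> card ?S"
    unfolding OPT_def by (intro Least_le) blast
  then show ?thesis by (simp add: card_positions_eq_count_list)
qed

lemma OPT_blowup_sum_bound:
  assumes labels: "set l \<subseteq> VH" and h: "h \<in> VH"
  shows "(card VH - 1) * OPT VH EH (length l) (blowup l) + count_list l h \<le> length l"
proof -
  let ?opt = "OPT VH EH (length l) (blowup l)"
  have "(card VH - 1) * ?opt = (\<Sum>g\<in>VH - {h}. ?opt)"
    using h finite_VH by simp
  also have "\<dots> \<le> (\<Sum>g\<in>VH - {h}. count_list l g)"
    by (rule sum_mono) (use OPT_blowup_le_count_list labels in blast)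
  also have "\<dots> + count_list l h = (\<Sum>g\<in>VH. count_list l g)"
    using h finite_VH by (simp add: sum.remove)
  also have "\<dots> = length l"
    using sum_count_set[OF labels finite_VH] .
  finally show ?thesis by simp
qed

lemma correct_advice_blowup_unique:
  assumes labels: "set l \<subseteq> VH" and h: "h \<in> VH"
    and rarest: "\<And>g. g \<in> VH \<Longrightarrow> g \<noteq> h \<Longrightarrow> count_list l h < count_list l g"
    and correct: "correct_advice VH EH (length l) (blowup l) u"
  shows "{i. i < length l \<and> u i} = {i. i < length l \<and> l ! i = h}"
proof -
  define M where "M = {i. i < length l \<and> u i}"
  let ?pos = "\<lambda>g. {i. i < length l \<and> l ! i = g}"
  have free: "H_free VH EH ({0..<length l} - M) (blowup l)"
    and card_M: "card M = OPT VH EH (length l) (blowup l)"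
    using correct unfolding correct_advice_def M_def by auto
  have "finite M" unfolding M_def by simp
  have card_M_le: "card M \<le> count_list l h"
    using card_M OPT_blowup_le_count_list[OF labels h] by simp
  obtain g where g: "g \<in> VH" and "g \<notin> (!) l ` ({0..<length l} - M)"
    using free H_free_blowup_iff[of "{0..<length l} - M" l] labels by auto
  then have pos_g: "?pos g \<subseteq> M" by auto
  then have "count_list l g \<le> card M"
    using card_mono[OF \<open>finite M\<close>] by (simp add: card_positions_eq_count_list[symmetric])
  with card_M_le rarest[OF g] have "g = h" by linarith
  with pos_g have "?pos h \<subseteq> M" by simp
  moreover have "card M \<le> card (?pos h)"
    using card_M_le by (simp add: card_positions_eq_count_list)
  ultimately have "?pos h = M" using card_seteq[OF \<open>finite M\<close>] by blast
  then show ?thesis unfolding M_def by simp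
qed

end

locale blowup_adversary = twin_free_blowup VH EH \<tau>
  for VH :: "'h set" and EH :: "'h \<Rightarrow> 'h \<Rightarrow> bool" and \<tau> :: bool +
  fixes h\<^sub>1 :: 'h and A :: online_alg
  assumes h\<^sub>1: "h\<^sub>1 \<in> VH" and solves: "solves VH EH A"
begin

definition h1_advice :: "'h list \<Rightarrow> nat \<Rightarrow> bool" where
  "h1_advice l i \<longleftrightarrow> i < length l \<and> l ! i = h\<^sub>1"

definition deleted :: "'h list \<Rightarrow> nat set" where
  "deleted l = A (length l) (blowup l) (h1_advice l)"

definition killed :: "'h list \<Rightarrow> 'h \<Rightarrow> bool" where
  "killed l h \<longleftrightarrow> (\<forall>i<length l. l ! i = h \<longrightarrow> i \<in> deleted l)"

definition next_label :: "'h list \<Rightarrow> 'h" where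
  "next_label l = (if killed l h\<^sub>1 then h\<^sub>1 else SOME h. h \<in> VH \<and> killed l h)"

primrec adv_seq :: "nat \<Rightarrow> 'h list" where
  "adv_seq 0 = []"
| "adv_seq (Suc t) = adv_seq t @ [next_label (adv_seq t)]"

definition label :: "nat \<Rightarrow> 'h" where
  "label i = next_label (adv_seq i)"

lemma card_VH_ge_1: "1 \<le> card VH"
  using h\<^sub>1 finite_VH by (metis One_nat_def Suc_leI card_gt_0_iff empty_iff)

lemma trunc_advice_h1_advice: "trunc_advice t (h1_advice l) = h1_advice (take t l)"
  unfolding trunc_advice_def h1_advice_def by (auto simp: fun_eq_iff)

lemma alg_out_blowup:
  "t \<le> length l \<Longrightarrow> alg_out A (blowup l) (h1_advice l) t = deleted (take t l)"
  unfolding alg_out_def deleted_def trunc_graph_blowup trunc_advice_h1_advice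
  by (simp add: min_absorb2)

lemma valid_run_blowup: "valid_run VH EH A (length l) (blowup l) (h1_advice l)"
  using solves online_graph_blowup unfolding solves_def by blast

lemma deleted_subset: "deleted l \<subseteq> {0..<length l}"
  using valid_run_blowup[of l] alg_out_blowup[of "length l" l]
  unfolding valid_run_def by auto

lemma H_free_undeleted: "H_free VH EH ({0..<length l} - deleted l) (blowup l)"
  using valid_run_blowup[of l] alg_out_blowup[of "length l" l]
  unfolding valid_run_def by (auto simp: trunc_graph_blowup)

lemma cost_blowup: "cost A (length l) (blowup l) (h1_advice l) = card (deleted l)"
  unfolding cost_def using alg_out_blowup[of "length l" l] by simp

lemma deleted_take_mono:
  assumes "t \<le> s" "s \<le> length l"
  shows "deleted (take t l) \<subseteq> deleted (take s l)"
  using valid_run_alg_out_mono[OF valid_run_blowup assms] alg_out_blowup assms by simp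

lemma ex_killed: "\<exists>h\<in>VH. killed l h"
proof -
  have "\<not> VH \<subseteq> (!) l ` ({0..<length l} - deleted l)"
    using H_free_undeleted has_induced_copy_blowup unfolding H_free_def by blast
  then obtain h where "h \<in> VH" "h \<notin> (!) l ` ({0..<length l} - deleted l)" by blast
  then have "killed l h" unfolding killed_def by (auto intro: image_eqI)
  with \<open>h \<in> VH\<close> show ?thesis ..
qed

lemma next_label_killed: "next_label l \<in> VH \<and> killed l (next_label l)"
  using h\<^sub>1 ex_killed[of l] someI_ex[of "\<lambda>h. h \<in> VH \<and> killed l h"]
  unfolding next_label_def by auto

lemma length_adv_seq [simp]: "length (adv_seq t) = t"
  by (induction t) auto

lemma take_adv_seq: "s \<le> t \<Longrightarrow> take s (adv_seq t) = adv_seq s"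
  by (induction t) (auto simp: le_Suc_eq)

lemma nth_adv_seq: "i < t \<Longrightarrow> adv_seq t ! i = label i"
proof -
  assume "i < t"
  then have "adv_seq t ! i = take (Suc i) (adv_seq t) ! i" by simp
  also have "\<dots> = label i" using \<open>i < t\<close> by (simp add: take_adv_seq nth_append label_def)
  finally show ?thesis .
qed

lemma set_adv_seq: "set (adv_seq t) \<subseteq> VH"
  using next_label_killed by (auto simp: set_conv_nth nth_adv_seq label_def)

lemma deleted_adv_seq_mono: "deleted (adv_seq t) \<subseteq> deleted (adv_seq (Suc t))"
  using deleted_take_mono[of t "Suc t" "adv_seq (Suc t)"]
  by (metis length_adv_seq order.refl le_SucI take_adv_seq)

lemma deleted_if_same_label: "i < t \<Longrightarrow> label i = label t \<Longrightarrow> i \<in> deleted (adv_seq t)"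
  using next_label_killed[of "adv_seq t"] unfolding killed_def by (simp add: nth_adv_seq label_def)

lemma inj_on_label_undeleted: "inj_on label ({0..<t} - deleted (adv_seq t))"
proof (induction t)
  case 0
  show ?case by simp
next
  case (Suc t)
  let ?T = "{0..<t} - deleted (adv_seq (Suc t))"
  have "inj_on label ?T"
    using Suc.IH by (rule inj_on_subset) (use deleted_adv_seq_mono in blast)
  moreover have "label t \<notin> label ` ?T"
    using deleted_if_same_label deleted_adv_seq_mono by fastforce
  ultimately have "inj_on label (insert t ?T)" by simp
  then show ?case by (rule inj_on_subset) auto
qed

lemma card_deleted_lower:
  assumes "label ` ({0..<t} - deleted (adv_seq t)) \<subseteq> Y" "finite Y"
  shows "t \<le> card (deleted (adv_seq t)) + card Y"
proof -
  let ?D = "deleted (adv_seq t)"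
  have "card ({0..<t} - ?D) \<le> card Y"
    using card_inj_on_le[OF inj_on_label_undeleted assms] .
  moreover have "card ({0..<t} - ?D) = t - card ?D"
    using deleted_subset[of "adv_seq t"] by (simp add: card_Diff_subset finite_subset)
  ultimately show ?thesis by linarith
qed

lemma card_deleted_lower_killed:
  assumes "killed (adv_seq t) h\<^sub>1"
  shows "t \<le> card (deleted (adv_seq t)) + (card VH - 1)"
proof -
  have "label ` ({0..<t} - deleted (adv_seq t)) \<subseteq> VH - {h\<^sub>1}"
    using assms next_label_killed unfolding killed_def by (auto simp: label_def nth_adv_seq)
  from card_deleted_lower[OF this] show ?thesis using finite_VH h\<^sub>1 by simp
qed

text \<open>Padding \<open>l\<close> with many copies of every other vertex makes \<open>h\<^sub>1\<close> strictly the rarest label,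
  so our advice is the only correct one for the padded graph, and the algorithm, having deleted
  \<open>deleted l\<close> already, pays at least that much on it.\<close>

lemma card_deleted_le_consistency:
  assumes r: "0 \<le> r" and labels: "set l \<subseteq> VH"
    and cons: "\<And>n E. online_graph n E \<Longrightarrow>
      \<exists>u. correct_advice VH EH n E u \<and> real (cost A n E u) \<le> r * real (OPT VH EH n E) + \<alpha>"
  shows "real (card (deleted l)) \<le> r * real (count_list l h\<^sub>1) + \<alpha>"
proof -
  from finite_VH have "finite (VH - {h\<^sub>1})" by simp
  then obtain pad where pad: "set pad \<subseteq> VH - {h\<^sub>1}"
    and many: "\<And>h. h \<in> VH - {h\<^sub>1} \<Longrightarrow> Suc (count_list l h\<^sub>1) \<le> count_list pad h"
    by (rule exists_list_count_list_ge[where m = "Suc (count_list l h\<^sub>1)"]) blast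
  define l' where "l' = l @ pad"
  let ?n = "length l'"
  have labels': "set l' \<subseteq> VH" using labels pad unfolding l'_def by auto
  have "h\<^sub>1 \<notin> set pad" using pad by blast
  then have count': "count_list l' h\<^sub>1 = count_list l h\<^sub>1" unfolding l'_def by simp
  have rarest: "count_list l' h\<^sub>1 < count_list l' h" if "h \<in> VH" "h \<noteq> h\<^sub>1" for h
    using many[of h] that count' unfolding l'_def by simp
  obtain u where correct: "correct_advice VH EH ?n (blowup l') u"
    and bound: "real (cost A ?n (blowup l') u) \<le> r * real (OPT VH EH ?n (blowup l')) + \<alpha>"
    using cons[OF online_graph_blowup] by blast
  have "{i. i < ?n \<and> u i} = {i. i < ?n \<and> l' ! i = h\<^sub>1}"
    by (rule correct_advice_blowup_unique[OF labels' h\<^sub>1 rarest correct])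
  then have "trunc_advice ?n u = h1_advice l'"
    unfolding trunc_advice_def h1_advice_def by (simp add: fun_eq_iff set_eq_iff)
  then have "cost A ?n (blowup l') u = card (deleted l')"
    using cost_blowup[of l'] unfolding cost_def alg_out_def by (simp add: trunc_advice_h1_advice)
  moreover have "deleted l \<subseteq> deleted l'"
    using deleted_take_mono[of "length l" ?n l'] unfolding l'_def by simp
  ultimately have "card (deleted l) \<le> cost A ?n (blowup l') u"
    using deleted_subset[of l'] by (simp add: card_mono finite_subset)
  moreover have "r * real (OPT VH EH ?n (blowup l')) \<le> r * real (count_list l h\<^sub>1)"
    using OPT_blowup_le_count_list[OF labels' h\<^sub>1] count' r by (simp add: mult_left_mono)
  ultimately show ?thesis using bound by linarith
qed

lemma competitive_deleted_bounds:
  assumes "competitive VH EH A r w" "0 \<le> r"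
  obtains \<alpha> where "\<And>l. set l \<subseteq> VH \<Longrightarrow> real (card (deleted l)) \<le> r * real (count_list l h\<^sub>1) + \<alpha>"
    and "\<And>l. real (card (deleted l)) \<le> w * real (OPT VH EH (length l) (blowup l)) + \<alpha>"
proof -
  obtain \<alpha> where bounds: "\<forall>n E. online_graph n E \<longrightarrow>
        (\<exists>u. correct_advice VH EH n E u \<and> real (cost A n E u) \<le> r * real (OPT VH EH n E) + \<alpha>)
      \<and> (\<forall>u. real (cost A n E u) \<le> w * real (OPT VH EH n E) + \<alpha>)"
    using assms(1) unfolding competitive_def by blast
  show thesis
  proof (rule that)
    show "real (card (deleted l)) \<le> r * real (count_list l h\<^sub>1) + \<alpha>" if "set l \<subseteq> VH" for l
      by (rule card_deleted_le_consistency[OF assms(2) that]) (use bounds in blast)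
    show "real (card (deleted l)) \<le> w * real (OPT VH EH (length l) (blowup l)) + \<alpha>" for l
      using bounds online_graph_blowup[of l] cost_blowup[of l] by metis
  qed
qed

text \<open>By robustness the number of copies of \<open>h\<^sub>1\<close> grows without bound, and it only grows at
  steps where all copies of \<open>h\<^sub>1\<close> are deleted.\<close>

lemma killed_h1_with_large_count:
  assumes "0 \<le> w"
    and rob: "\<And>l. real (card (deleted l)) \<le> w * real (OPT VH EH (length l) (blowup l)) + \<alpha>"
  obtains t where "killed (adv_seq t) h\<^sub>1" "N \<le> count_list (adv_seq t) h\<^sub>1"
proof -
  let ?x = "\<lambda>t. count_list (adv_seq t) h\<^sub>1"
  obtain T :: nat where T: "w * real N + real (card VH) + \<alpha> < real T"
    using reals_Archimedean2 by blast
  have "N < ?x T"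
  proof (rule ccontr)
    assume "\<not> N < ?x T"
    then have "w * real (OPT VH EH T (blowup (adv_seq T))) \<le> w * real N"
      using OPT_blowup_le_count_list[OF set_adv_seq h\<^sub>1, of T] \<open>0 \<le> w\<close>
      by (simp add: mult_left_mono)
    moreover have "T \<le> card (deleted (adv_seq T)) + card VH"
      using card_deleted_lower[of T VH] next_label_killed finite_VH by (auto simp: label_def)
    ultimately show False using rob[of "adv_seq T"] T by simp
  qed
  moreover have "?x (Suc t) \<le> ?x t + 1" for t by simp
  ultimately obtain t where "N \<le> ?x t" "?x t < ?x (Suc t)"
    using exists_increase_at_least[of ?x N T] by auto
  moreover from this(2) have "next_label (adv_seq t) = h\<^sub>1" by (simp split: if_splits)
  then have "killed (adv_seq t) h\<^sub>1" using next_label_killed[of "adv_seq t"] by simp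
  ultimately show thesis using that by blast
qed

lemma killed_h1_tradeoff_bound:
  defines "K \<equiv> real (card VH) - 1"
  assumes "K \<le> w"
    and cons: "\<And>l. set l \<subseteq> VH \<Longrightarrow> real (card (deleted l)) \<le> r * real (count_list l h\<^sub>1) + \<alpha>"
    and rob: "\<And>l. real (card (deleted l)) \<le> w * real (OPT VH EH (length l) (blowup l)) + \<alpha>"
    and "killed (adv_seq t) h\<^sub>1"
  shows "(K - (w - K) * (r - 1)) * real (count_list (adv_seq t) h\<^sub>1)
    \<le> (w - K) * (\<alpha> + K) + K * K + K * \<alpha>"
proof (rule tradeoff_linear_bound[OF _ \<open>K \<le> w\<close> _ cons[OF set_adv_seq] rob])
  show "0 \<le> K" unfolding K_def using card_VH_ge_1 by simp
  have "(card VH - 1) * OPT VH EH t (blowup (adv_seq t)) + count_list (adv_seq t) h\<^sub>1 \<le> t"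
    using OPT_blowup_sum_bound[OF set_adv_seq h\<^sub>1, of t] by simp
  then have "real ((card VH - 1) * OPT VH EH t (blowup (adv_seq t))
      + count_list (adv_seq t) h\<^sub>1) \<le> real t"
    by (simp only: of_nat_le_iff)
  then show "K * real (OPT VH EH (length (adv_seq t)) (blowup (adv_seq t)))
      + real (count_list (adv_seq t) h\<^sub>1) \<le> real t"
    unfolding K_def using card_VH_ge_1 by (simp add: of_nat_diff)
  show "real t - K \<le> real (card (deleted (adv_seq t)))"
    using card_deleted_lower_killed[OF \<open>killed (adv_seq t) h\<^sub>1\<close>] card_VH_ge_1
    unfolding K_def by (simp add: of_nat_diff)
qed simp

lemma competitive_tradeoff:
  defines "K \<equiv> real (card VH) - 1"
  assumes comp: "competitive VH EH A r w" and "1 \<le> r" "K \<le> w"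
  shows "K \<le> (w - K) * (r - 1)"
proof (rule ccontr)
  define \<delta> where "\<delta> = K - (w - K) * (r - 1)"
  assume "\<not> K \<le> (w - K) * (r - 1)"
  then have "0 < \<delta>" unfolding \<delta>_def by simp
  obtain \<alpha> where cons: "\<And>l. set l \<subseteq> VH \<Longrightarrow> real (card (deleted l)) \<le> r * real (count_list l h\<^sub>1) + \<alpha>"
    and rob: "\<And>l. real (card (deleted l)) \<le> w * real (OPT VH EH (length l) (blowup l)) + \<alpha>"
    using competitive_deleted_bounds[OF comp] \<open>1 \<le> r\<close> by auto
  define C where "C = (w - K) * (\<alpha> + K) + K * K + K * \<alpha>"
  obtain N :: nat where N: "C / \<delta> < real N" using reals_Archimedean2 by blast
  have "0 \<le> w" using \<open>K \<le> w\<close> card_VH_ge_1 unfolding K_def by simp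
  then obtain t where killed: "killed (adv_seq t) h\<^sub>1"
    and large: "N \<le> count_list (adv_seq t) h\<^sub>1"
    using killed_h1_with_large_count rob by blast
  have "\<delta> * real (count_list (adv_seq t) h\<^sub>1) \<le> C"
    using killed_h1_tradeoff_bound[OF _ cons rob killed] \<open>K \<le> w\<close>
    unfolding \<delta>_def C_def K_def by simp
  moreover have "C < \<delta> * real N" using N \<open>0 < \<delta>\<close> by (simp add: pos_divide_less_eq mult.commute)
  moreover have "\<delta> * real N \<le> \<delta> * real (count_list (adv_seq t) h\<^sub>1)"
    using large \<open>0 < \<delta>\<close> by (simp add: mult_left_mono)
  ultimately show False by linarith
qed

end

theorem mainTheorem7:
  fixes VH :: "'h set" and EH :: "'h \<Rightarrow> 'h \<Rightarrow> bool" and k :: nat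
    and p :: real and A :: online_alg
  assumes "simple_graph VH EH"
    and "connected_graph VH EH"
    and "k = card VH" and "k > 1"
    and "\<not> has_true_twins VH EH \<or> \<not> has_false_twins VH EH"
    and "0 \<le> p" and "p < 1"
    and "solves VH EH A"
  shows "\<not> (consistency VH EH A < ereal (real k - (real k - 1) / (2 - p))
           \<and> robustness VH EH A < ereal (real k + p / (1 - p)))"
proof
  assume "consistency VH EH A < ereal (real k - (real k - 1) / (2 - p))
           \<and> robustness VH EH A < ereal (real k + p / (1 - p))"
  then obtain r w where comp: "competitive VH EH A r w"
    and r: "r < real k - (real k - 1) / (2 - p)" and w: "w < real k + p / (1 - p)"
    using consistency_robustness_lessE by blast
  define K where "K = real k - 1"
  have "0 < K" "K / (2 - p) < K" "0 \<le> p / (1 - p)"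
    using \<open>k > 1\<close> \<open>0 \<le> p\<close> \<open>p < 1\<close> unfolding K_def by (simp_all add: divide_less_eq)
  obtain h\<^sub>1 where "h\<^sub>1 \<in> VH" using \<open>k = card VH\<close> \<open>k > 1\<close> by fastforce
  interpret blowup_adversary VH EH "\<not> has_true_twins VH EH" h\<^sub>1 A
    using assms(1,5,8) \<open>h\<^sub>1 \<in> VH\<close> by unfold_locales auto
  have "K \<le> (max w K - K) * (max r 1 - 1)"
    using competitive_tradeoff[OF competitive_mono[OF comp]] \<open>k = card VH\<close>
    unfolding K_def by simp
  moreover have "(max w K - K) * (max r 1 - 1) < K"
    using \<open>0 < K\<close> \<open>K / (2 - p) < K\<close> \<open>0 \<le> p / (1 - p)\<close> r w
    by (intro product_lt_of_bounds[OF \<open>0 \<le> p\<close> \<open>p < 1\<close>]) (auto simp: K_def)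
  ultimately show False by simp
qed

end
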